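(* With notation as in the context, for every $n\ge1$, every $2\le j\le a$ with $j\equiv a\pmod 2$ and every $1\le m\le d$, \[ (D_{2dn})^aA_j(n)\in\mathbb Z,\qquad (D_{2dn})^aB_m(n)\in\mathbb Z, \] and, as $n\to\infty$, \[ \frac{\log|A_j(n)|}{n},\ \frac{\log|B_m(n)|}{n}\ \le\ 2a\log2+4(b+d)\log(b+d)-4d\log d+o(1). \]
   Context: Fix positive integers $d,a,b$ with $a\ge 2b$. For each positive integer $n$ let $Q_n(t)=\prod_{dn<l\le (d+2b)n}(t-l)(t+l)$, $R_n(t)=\bigl(\prod_{-n\le l\le n}(t-dl)\bigr)^a$, and $P_n(t)=\frac{Q_n(t)}{R_n(t)}((2n)!)^{a-2b}d^{2na}$, with unique partial fraction decomposition $P_n(t)=\sum_{j=1}^{a}\sum_{l=-n}^n A_{l,j}(n)(t-dl)^{-j}$. Set $A_j(n)=\sum_{l=-n}^nA_{l,j}(n)$ and, for $1\le m\le d$, \[ B_m(n)=\sum_{j=1}^a\sum_{l=-n}^{n}A_{l,j}(n)\sum_{k=0}^{n-l-1}\frac{1}{(dk+m)^j}. \] $D_{2dn}=\operatorname{lcm}\{1,2,\dots,2dn\}$. *)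

theory Defs
  imports "HOL-Analysis.Analysis"
begin

definition Qn :: "nat \<Rightarrow> nat \<Rightarrow> nat \<Rightarrow> real \<Rightarrow> real" where
  "Qn d b n t = (\<Prod>l\<in>{d*n<..(d+2*b)*n}. (t - real l) * (t + real l))"

definition Rn :: "nat \<Rightarrow> nat \<Rightarrow> nat \<Rightarrow> real \<Rightarrow> real" where
  "Rn d a n t = (\<Prod>l\<in>{-int n..int n}. (t - real d * of_int l)) ^ a"

definition Pn :: "nat \<Rightarrow> nat \<Rightarrow> nat \<Rightarrow> nat \<Rightarrow> real \<Rightarrow> real" where
  "Pn d a b n t = Qn d b n t / Rn d a n t * (fact (2*n)) ^ (a - 2*b) * real d ^ (2*n*a)"

definition Acoef :: "nat \<Rightarrow> nat \<Rightarrow> nat \<Rightarrow> nat \<Rightarrow> int \<Rightarrow> nat \<Rightarrow> real" where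
  "Acoef d a b n = (THE A. (\<forall>l j. A l j \<noteq> 0 \<longrightarrow> l \<in> {-int n..int n} \<and> j \<in> {1..a}) \<and>
     (\<forall>t::real. (\<forall>l\<in>{-int n..int n}. t \<noteq> real d * of_int l) \<longrightarrow>
        Pn d a b n t = (\<Sum>j=1..a. \<Sum>l\<in>{-int n..int n}. A l j / (t - real d * of_int l) ^ j)))"

definition Aj :: "nat \<Rightarrow> nat \<Rightarrow> nat \<Rightarrow> nat \<Rightarrow> nat \<Rightarrow> real" where
  "Aj d a b j n = (\<Sum>l\<in>{-int n..int n}. Acoef d a b n l j)"

definition Bm :: "nat \<Rightarrow> nat \<Rightarrow> nat \<Rightarrow> nat \<Rightarrow> nat \<Rightarrow> real" where
  "Bm d a b m n = (\<Sum>j=1..a. \<Sum>l\<in>{-int n..int n}.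
      Acoef d a b n l j * (\<Sum>k\<in>{0..<nat (int n - l)}. 1 / (real d * real k + real m) ^ j))"

definition Dlcm :: "nat \<Rightarrow> nat" where
  "Dlcm N = Lcm {1..N}"

end

theory Submission
  imports Defs "HOL-Computational_Algebra.Polynomial" "HOL-Real_Asymp.Real_Asymp"
begin

text \<open>
  The rational function \<open>P_n\<close> is a product of \<open>a\<close> factors
  \<open>d^(2n) N_i(t) / \<Prod>l. (t - dl)\<close>, each with a numerator \<open>N_i\<close> of degree \<open>2n\<close>
  (a block of \<open>2n\<close> consecutive linear factors of \<open>Q_n\<close>, or the constant \<open>(2n)!\<close>).
  By Lagrange interpolation each factor is a sum of simple fractions
  \<open>\<Sum>l. r_i(l) / (t - dl)\<close> whose residues \<open>r_i(l) = N_i(dl) / W(l)\<close> are integers,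
  since \<open>W(l) = \<plusminus>(n+l)!(n-l)!\<close> divides \<open>(2n)!\<close>, which divides \<open>N_i(dl)\<close>.
  Multiplying the factors in one at a time gives explicit recursive formulas for the partial
  fraction coefficients \<open>A_{l,j}\<close>; by uniqueness of partial fractions they are the
  coefficients of the statement.  The recursion shows that each multiplication step
  (i) preserves integrality after scaling by powers of \<open>D = lcm{1..2dn}\<close>, because every
  new denominator is a power of a pole distance \<open>d(m - l)\<close> with \<open>|d(m-l)| \<le> 2dn\<close>, and
  (ii) multiplies the total mass \<open>\<Sum>|A_{l,j}|\<close> by at most \<open>(K+3) \<Sum>|r_i(l)|\<close>.
  The residue masses are bounded through \<open>\<Sum>l 1/((n+l)!(n-l)!) = 4^n/(2n)!\<close> and a
  multinomial estimate, which yields the exponential rate \<open>exp(C n)\<close>.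
\<close>

lemma two_pole_split:
  fixes t x y :: real
  assumes "t \<noteq> x" "t \<noteq> y" "x \<noteq> y" "j \<ge> 1"
  shows "1 / ((t - x)^j * (t - y)) =
         1 / ((y - x)^j * (t - y)) - (\<Sum>i=1..j. 1 / ((y - x)^(j - i + 1) * (t - x)^i))"
  using assms(4)
proof (induction j rule: dec_induct)
  case base
  have "t - x \<noteq> 0" "y - x \<noteq> 0" "t - y \<noteq> 0" using assms by auto
  then show ?case by (simp add: divide_simps)
next
  case (step j)
  have simple: "1 / ((t - x) * (t - y)) = 1 / ((y - x) * (t - y)) - 1 / ((y - x) * (t - x))"
    using assms by (simp add: divide_simps)
  have shift: "(\<Sum>i=1..j. 1 / ((y - x)^(j - i + 1) * (t - x)^Suc i))
      = (\<Sum>i=2..Suc j. 1 / ((y - x)^(Suc j - i + 1) * (t - x)^i))"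
    by (simp only: numeral_2_eq_2 sum.shift_bounds_cl_Suc_ivl One_nat_def) simp
  have split: "(\<Sum>i=1..Suc j. 1 / ((y - x)^(Suc j - i + 1) * (t - x)^i))
      = 1 / ((y - x)^Suc j * (t - x)) + (\<Sum>i=2..Suc j. 1 / ((y - x)^(Suc j - i + 1) * (t - x)^i))"
    by (subst sum.atLeast_Suc_atMost) (auto simp: numeral_2_eq_2)
  have "1 / ((t - x)^Suc j * (t - y)) = (1 / ((t - x)^j * (t - y))) / (t - x)"
    by (simp add: field_simps)
  also have "\<dots> = (1 / ((y - x)^j * (t - y)) - (\<Sum>i=1..j. 1 / ((y - x)^(j - i + 1) * (t - x)^i))) / (t - x)"
    by (simp only: step.IH)
  also have "\<dots> = 1 / ((t - x) * (t - y)) / (y - x)^j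
      - (\<Sum>i=1..j. 1 / ((y - x)^(j - i + 1) * (t - x)^Suc i))"
    by (simp add: diff_divide_distrib sum_divide_distrib mult_ac)
  also have "1 / ((t - x) * (t - y)) / (y - x)^j
      = 1 / ((y - x)^Suc j * (t - y)) - 1 / ((y - x)^Suc j * (t - x))"
    by (simp only: simple diff_divide_distrib) (simp add: mult_ac)
  finally show ?case using shift split by simp
qed

definition pf :: "'i set \<Rightarrow> ('i \<Rightarrow> real) \<Rightarrow> nat \<Rightarrow> ('i \<Rightarrow> nat \<Rightarrow> real) \<Rightarrow> real \<Rightarrow> real" where
  "pf I x K c t = (\<Sum>j=1..K. \<Sum>l\<in>I. c l j / (t - x l)^j)"

definition sf :: "'i set \<Rightarrow> ('i \<Rightarrow> real) \<Rightarrow> ('i \<Rightarrow> real) \<Rightarrow> real \<Rightarrow> real" where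
  "sf I x r t = (\<Sum>l\<in>I. r l / (t - x l))"

text \<open>Multiplying a term
  \<open>c l j / (t - x l)^j\<close> by \<open>r m / (t - x m)\<close> contributes to the pole at \<open>x l\<close>
  with order \<open>j + 1\<close> if \<open>m = l\<close> (\<open>diag_coeff\<close>); if \<open>m \<noteq> l\<close> it contributes a simple
  pole at \<open>x m\<close> (\<open>cross_coeff\<close>) and poles of orders \<open>\<le> j\<close> at \<open>x l\<close>
  (\<open>tail_coeff\<close>), by \<open>two_pole_split\<close>.\<close>

definition diag_coeff :: "('i \<Rightarrow> nat \<Rightarrow> real) \<Rightarrow> ('i \<Rightarrow> real) \<Rightarrow> 'i \<Rightarrow> nat \<Rightarrow> real" where
  "diag_coeff c r l j = (if 2 \<le> j then c l (j - 1) * r l else 0)"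

definition cross_coeff ::
  "'i set \<Rightarrow> ('i \<Rightarrow> real) \<Rightarrow> nat \<Rightarrow> ('i \<Rightarrow> nat \<Rightarrow> real) \<Rightarrow> ('i \<Rightarrow> real) \<Rightarrow> 'i \<Rightarrow> nat \<Rightarrow> real" where
  "cross_coeff I x K c r m j = (if j = 1 then
      (\<Sum>l\<in>I. \<Sum>i=1..K. if m \<noteq> l then c l i * r m / (x m - x l)^i else 0) else 0)"

definition tail_coeff ::
  "'i set \<Rightarrow> ('i \<Rightarrow> real) \<Rightarrow> nat \<Rightarrow> ('i \<Rightarrow> nat \<Rightarrow> real) \<Rightarrow> ('i \<Rightarrow> real) \<Rightarrow> 'i \<Rightarrow> nat \<Rightarrow> real" where
  "tail_coeff I x K c r l j =
      (\<Sum>m\<in>I. \<Sum>i=1..K. if m \<noteq> l \<and> j \<le> i then c l i * r m / (x m - x l)^(i - j + 1) else 0)"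

definition mult_coeff ::
  "'i set \<Rightarrow> ('i \<Rightarrow> real) \<Rightarrow> nat \<Rightarrow> ('i \<Rightarrow> nat \<Rightarrow> real) \<Rightarrow> ('i \<Rightarrow> real) \<Rightarrow> 'i \<Rightarrow> nat \<Rightarrow> real" where
  "mult_coeff I x K c r l j = (if l \<in> I \<and> 1 \<le> j \<and> j \<le> Suc K then
      diag_coeff c r l j + cross_coeff I x K c r l j - tail_coeff I x K c r l j else 0)"

lemma pf_times_sf_term:
  fixes c :: "'i \<Rightarrow> nat \<Rightarrow> real"
  assumes "t \<noteq> x l" "t \<noteq> x m" "m \<noteq> l \<Longrightarrow> x m \<noteq> x l" "j \<in> {1..K}"
  shows "c l j * r m / ((t - x l)^j * (t - x m)) =
           (if m = l then c l j * r l / (t - x l)^Suc j else 0)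
         + (if m \<noteq> l then c l j * r m / ((x m - x l)^j * (t - x m)) else 0)
         - (\<Sum>i=1..K. if m \<noteq> l \<and> i \<le> j then c l j * r m / ((x m - x l)^(j - i + 1) * (t - x l)^i) else 0)"
proof (cases "m = l")
  case True
  then show ?thesis by (simp add: power_Suc2 mult_ac)
next
  case False
  have "(\<Sum>i=1..K. if i \<le> j then c l j * r m / ((x m - x l)^(j - i + 1) * (t - x l)^i) else 0)
      = (\<Sum>i=1..j. c l j * r m * (1 / ((x m - x l)^(j - i + 1) * (t - x l)^i)))"
    using assms(4) by (intro sum.mono_neutral_cong_right) auto
  moreover have "1 / ((t - x l)^j * (t - x m)) =
      1 / ((x m - x l)^j * (t - x m)) - (\<Sum>i=1..j. 1 / ((x m - x l)^(j - i + 1) * (t - x l)^i))"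
    using assms False by (intro two_pole_split) auto
  then have "c l j * r m * (1 / ((t - x l)^j * (t - x m))) = c l j * r m * (1 / ((x m - x l)^j * (t - x m)))
      - (\<Sum>i=1..j. c l j * r m * (1 / ((x m - x l)^(j - i + 1) * (t - x l)^i)))"
    by (simp only: right_diff_distrib sum_distrib_left)
  ultimately show ?thesis using False by simp
qed

lemma pf_times_sf_expand:
  assumes "inj_on x I" "t \<notin> x ` I"
  shows "pf I x K c t * sf I x r t =
      (\<Sum>j=1..K. \<Sum>l\<in>I. c l j * r l / (t - x l)^Suc j)
    + (\<Sum>j=1..K. \<Sum>l\<in>I. \<Sum>m\<in>I. if m \<noteq> l then c l j * r m / ((x m - x l)^j * (t - x m)) else 0)
    - (\<Sum>j=1..K. \<Sum>l\<in>I. \<Sum>m\<in>I. \<Sum>i=1..K.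
         if m \<noteq> l \<and> i \<le> j then c l j * r m / ((x m - x l)^(j - i + 1) * (t - x l)^i) else 0)"
proof (cases "finite I")
  case True
  have "pf I x K c t * sf I x r t = (\<Sum>j=1..K. \<Sum>l\<in>I. \<Sum>m\<in>I. c l j * r m / ((t - x l)^j * (t - x m)))"
    by (simp add: pf_def sf_def sum_distrib_left sum_distrib_right sum_divide_distrib mult_ac)
  also have "\<dots> = (\<Sum>j=1..K. \<Sum>l\<in>I. \<Sum>m\<in>I.
        (if m = l then c l j * r l / (t - x l)^Suc j else 0)
      + (if m \<noteq> l then c l j * r m / ((x m - x l)^j * (t - x m)) else 0)
      - (\<Sum>i=1..K. if m \<noteq> l \<and> i \<le> j then c l j * r m / ((x m - x l)^(j - i + 1) * (t - x l)^i) else 0))"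
    using assms by (intro sum.cong refl pf_times_sf_term) (auto dest: inj_onD)
  finally show ?thesis using True by (simp add: sum.distrib sum_subtractf)
qed (simp add: pf_def sf_def)

lemma pf_diag_coeff:
  "pf I x (Suc K) (diag_coeff c r) t = (\<Sum>j=1..K. \<Sum>l\<in>I. c l j * r l / (t - x l)^Suc j)"
proof -
  have "pf I x (Suc K) (diag_coeff c r) t = (\<Sum>j=2..Suc K. \<Sum>l\<in>I. c l (j - 1) * r l / (t - x l)^j)"
    unfolding pf_def diag_coeff_def by (subst sum.atLeast_Suc_atMost) (auto simp: numeral_2_eq_2)
  also have "\<dots> = (\<Sum>j=1..K. \<Sum>l\<in>I. c l j * r l / (t - x l)^Suc j)"
    by (simp only: numeral_2_eq_2 sum.shift_bounds_cl_Suc_ivl One_nat_def) simp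
  finally show ?thesis .
qed

lemma pf_cross_coeff:
  "pf I x (Suc K) (cross_coeff I x K c r) t =
     (\<Sum>j=1..K. \<Sum>l\<in>I. \<Sum>m\<in>I. if m \<noteq> l then c l j * r m / ((x m - x l)^j * (t - x m)) else 0)"
proof -
  have "pf I x (Suc K) (cross_coeff I x K c r) t = (\<Sum>m\<in>I. cross_coeff I x K c r m 1 / (t - x m))"
    unfolding pf_def cross_coeff_def by (subst sum.atLeast_Suc_atMost) auto
  also have "\<dots> = (\<Sum>m\<in>I. \<Sum>l\<in>I. \<Sum>j=1..K. if m \<noteq> l then c l j * r m / ((x m - x l)^j * (t - x m)) else 0)"
    unfolding cross_coeff_def by (simp add: sum_divide_distrib) (intro sum.cong refl, simp)
  also have "\<dots> = (\<Sum>l\<in>I. \<Sum>m\<in>I. \<Sum>j=1..K. if m \<noteq> l then c l j * r m / ((x m - x l)^j * (t - x m)) else 0)"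
    by (rule sum.swap)
  also have "\<dots> = (\<Sum>l\<in>I. \<Sum>j=1..K. \<Sum>m\<in>I. if m \<noteq> l then c l j * r m / ((x m - x l)^j * (t - x m)) else 0)"
    by (intro sum.cong refl) (rule sum.swap)
  also have "\<dots> = (\<Sum>j=1..K. \<Sum>l\<in>I. \<Sum>m\<in>I. if m \<noteq> l then c l j * r m / ((x m - x l)^j * (t - x m)) else 0)"
    by (rule sum.swap)
  finally show ?thesis .
qed

lemma pf_tail_coeff:
  "pf I x (Suc K) (tail_coeff I x K c r) t =
     (\<Sum>j=1..K. \<Sum>l\<in>I. \<Sum>m\<in>I. \<Sum>i=1..K. F j l m i)"
  if "F = (\<lambda>j l m i. if m \<noteq> l \<and> i \<le> j then c l j * r m / ((x m - x l)^(j - i + 1) * (t - x l)^i) else 0)"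
proof -
  have "pf I x (Suc K) (tail_coeff I x K c r) t = (\<Sum>i=1..K. \<Sum>l\<in>I. tail_coeff I x K c r l i / (t - x l)^i)"
    by (simp add: pf_def tail_coeff_def)
  also have "\<dots> = (\<Sum>i=1..K. \<Sum>l\<in>I. \<Sum>m\<in>I. \<Sum>j=1..K. F j l m i)"
    unfolding that tail_coeff_def sum_divide_distrib by (intro sum.cong refl) (auto simp: mult_ac)
  also have "\<dots> = (\<Sum>i=1..K. \<Sum>l\<in>I. \<Sum>j=1..K. \<Sum>m\<in>I. F j l m i)"
    by (intro sum.cong refl) (rule sum.swap)
  also have "\<dots> = (\<Sum>i=1..K. \<Sum>j=1..K. \<Sum>l\<in>I. \<Sum>m\<in>I. F j l m i)"
    by (intro sum.cong refl) (rule sum.swap)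
  also have "\<dots> = (\<Sum>j=1..K. \<Sum>i=1..K. \<Sum>l\<in>I. \<Sum>m\<in>I. F j l m i)"
    by (rule sum.swap)
  also have "\<dots> = (\<Sum>j=1..K. \<Sum>l\<in>I. \<Sum>i=1..K. \<Sum>m\<in>I. F j l m i)"
    by (intro sum.cong refl) (rule sum.swap)
  also have "\<dots> = (\<Sum>j=1..K. \<Sum>l\<in>I. \<Sum>m\<in>I. \<Sum>i=1..K. F j l m i)"
    by (intro sum.cong refl) (rule sum.swap)
  finally show ?thesis .
qed

lemma pf_mult_coeff:
  assumes "inj_on x I" "t \<notin> x ` I"
  shows "pf I x (Suc K) (mult_coeff I x K c r) t = pf I x K c t * sf I x r t"
proof -
  have "pf I x (Suc K) (mult_coeff I x K c r) t = (\<Sum>j=1..Suc K. \<Sum>l\<in>I.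
      (diag_coeff c r l j + cross_coeff I x K c r l j - tail_coeff I x K c r l j) / (t - x l)^j)"
    unfolding pf_def by (intro sum.cong refl) (simp add: mult_coeff_def)
  also have "\<dots> = pf I x (Suc K) (diag_coeff c r) t + pf I x (Suc K) (cross_coeff I x K c r) t
      - pf I x (Suc K) (tail_coeff I x K c r) t"
    by (simp only: pf_def add_divide_distrib diff_divide_distrib sum.distrib sum_subtractf)
  also have "\<dots> = pf I x K c t * sf I x r t"
    by (simp only: pf_diag_coeff pf_cross_coeff pf_tail_coeff[OF refl] pf_times_sf_expand[OF assms])
  finally show ?thesis .
qed

lemma Ints_if_zero: "(P \<Longrightarrow> a \<in> \<int>) \<Longrightarrow> (if P then a else 0) \<in> \<int>"
  by simp

definition scaled_integral :: "real \<Rightarrow> nat \<Rightarrow> ('i \<Rightarrow> nat \<Rightarrow> real) \<Rightarrow> bool" where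
  "scaled_integral D K c \<longleftrightarrow> (\<forall>l j. 1 \<le> j \<longrightarrow> j \<le> K \<longrightarrow> D^(K - j) * c l j \<in> \<int>)"

lemma scaled_integralD: "scaled_integral D K c \<Longrightarrow> 1 \<le> j \<Longrightarrow> j \<le> K \<Longrightarrow> D^(K - j) * c l j \<in> \<int>"
  by (simp add: scaled_integral_def)

lemma diag_coeff_integral:
  assumes c: "scaled_integral D K c" and r: "r l \<in> \<int>" and j: "j \<le> Suc K"
  shows "D^(Suc K - j) * diag_coeff c r l j \<in> \<int>"
proof (cases "2 \<le> j")
  case True
  then have "D^(Suc K - j) * diag_coeff c r l j = (D^(K - (j - 1)) * c l (j - 1)) * r l"
    using j by (simp add: diag_coeff_def Suc_diff_le)
  also have "\<dots> \<in> \<int>"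
    by (rule Ints_mult[OF scaled_integralD[OF c] r]) (use True j in auto)
  finally show ?thesis .
qed (simp add: diag_coeff_def)

lemma cross_coeff_integral:
  assumes c: "scaled_integral D K c" and r: "r m \<in> \<int>"
    and xD: "\<And>l. l \<in> I \<Longrightarrow> m \<noteq> l \<Longrightarrow> D / (x m - x l) \<in> \<int>"
  shows "D^(Suc K - j) * cross_coeff I x K c r m j \<in> \<int>"
proof (cases "j = 1")
  case True
  have "D^(Suc K - j) * cross_coeff I x K c r m j = (\<Sum>l\<in>I. \<Sum>i=1..K.
      D^K * (if m \<noteq> l then c l i * r m / (x m - x l)^i else 0))"
    using True by (simp add: cross_coeff_def sum_distrib_left)
  also have "\<dots> = (\<Sum>l\<in>I. \<Sum>i=1..K.
      if m \<noteq> l then (D^(K - i) * c l i) * r m * (D / (x m - x l))^i else 0)"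
  proof (intro sum.cong refl)
    fix l i assume "i \<in> {1..K}"
    then have "D^K = D^(K - i) * D^i" by (simp flip: power_add)
    then show "D^K * (if m \<noteq> l then c l i * r m / (x m - x l)^i else 0)
        = (if m \<noteq> l then (D^(K - i) * c l i) * r m * (D / (x m - x l))^i else 0)"
      by (simp add: power_divide)
  qed
  also have "\<dots> \<in> \<int>"
    by (intro Ints_sum Ints_if_zero Ints_mult[OF Ints_mult[OF scaled_integralD[OF c] r] Ints_power[OF xD]])
      auto
  finally show ?thesis .
qed (simp add: cross_coeff_def)

lemma tail_coeff_integral:
  assumes c: "scaled_integral D K c" and r: "\<And>m. m \<in> I \<Longrightarrow> r m \<in> \<int>"
    and xD: "\<And>m. m \<in> I \<Longrightarrow> m \<noteq> l \<Longrightarrow> D / (x m - x l) \<in> \<int>"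
  shows "D^(Suc K - j) * tail_coeff I x K c r l j \<in> \<int>"
proof -
  have "D^(Suc K - j) * tail_coeff I x K c r l j = (\<Sum>m\<in>I. \<Sum>i=1..K.
      if m \<noteq> l \<and> j \<le> i then (D^(K - i) * c l i) * r m * (D / (x m - x l))^(i - j + 1) else 0)"
    unfolding tail_coeff_def sum_distrib_left
  proof (intro sum.cong refl)
    fix m i assume "i \<in> {1..K}"
    then have "j \<le> i \<Longrightarrow> Suc K - j = (K - i) + (i - j + 1)" by auto
    then have "j \<le> i \<Longrightarrow> D^(Suc K - j) = D^(K - i) * D^(i - j + 1)"
      by (simp only: power_add)
    then show "D^(Suc K - j) * (if m \<noteq> l \<and> j \<le> i then c l i * r m / (x m - x l)^(i - j + 1) else 0)
        = (if m \<noteq> l \<and> j \<le> i then (D^(K - i) * c l i) * r m * (D / (x m - x l))^(i - j + 1) else 0)"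
      by (simp add: power_divide)
  qed
  also have "\<dots> \<in> \<int>"
    by (intro Ints_sum Ints_if_zero Ints_mult[OF Ints_mult[OF scaled_integralD[OF c] r] Ints_power[OF xD]])
      auto
  finally show ?thesis .
qed

lemma mult_coeff_integral:
  assumes "scaled_integral D K c" and "\<And>l. l \<in> I \<Longrightarrow> r l \<in> \<int>"
    and "\<And>l m. l \<in> I \<Longrightarrow> m \<in> I \<Longrightarrow> m \<noteq> l \<Longrightarrow> D / (x m - x l) \<in> \<int>"
  shows "scaled_integral D (Suc K) (mult_coeff I x K c r)"
  unfolding scaled_integral_def
proof (intro allI impI)
  fix l j assume "1 \<le> j" "j \<le> Suc K"
  show "D^(Suc K - j) * mult_coeff I x K c r l j \<in> \<int>"
  proof (cases "l \<in> I")
    case True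
    have "D^(Suc K - j) * mult_coeff I x K c r l j = D^(Suc K - j) * diag_coeff c r l j
        + D^(Suc K - j) * cross_coeff I x K c r l j - D^(Suc K - j) * tail_coeff I x K c r l j"
      using True \<open>1 \<le> j\<close> \<open>j \<le> Suc K\<close> by (simp add: mult_coeff_def algebra_simps)
    also have "\<dots> \<in> \<int>"
      using assms True \<open>j \<le> Suc K\<close>
      by (intro Ints_add Ints_diff diag_coeff_integral cross_coeff_integral tail_coeff_integral) auto
    finally show ?thesis .
  qed (simp add: mult_coeff_def)
qed

lemma abs_if_div_power_le:
  fixes a b y :: real
  assumes "P \<Longrightarrow> 1 \<le> \<bar>y\<bar>"
  shows "\<bar>if P then a * b / y^e else 0\<bar> \<le> \<bar>a\<bar> * \<bar>b\<bar>"
proof (cases P)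
  case True
  then have "1 \<le> \<bar>y\<bar>^e" using assms by (simp add: one_le_power)
  then have "\<bar>a * b\<bar> / \<bar>y\<bar>^e \<le> \<bar>a * b\<bar>"
    by (simp add: divide_le_eq mult_le_cancel_left1 mult.commute[of _ "\<bar>a * b\<bar>"])
  then show ?thesis using True by (simp add: power_abs abs_mult)
qed simp

definition coeff_mass :: "'i set \<Rightarrow> nat \<Rightarrow> ('i \<Rightarrow> nat \<Rightarrow> real) \<Rightarrow> real" where
  "coeff_mass I K c = (\<Sum>l\<in>I. \<Sum>j=1..K. \<bar>c l j\<bar>)"

lemma diag_coeff_mass:
  assumes "finite I"
  shows "(\<Sum>l\<in>I. \<Sum>j=1..Suc K. \<bar>diag_coeff c r l j\<bar>) \<le> coeff_mass I K c * (\<Sum>m\<in>I. \<bar>r m\<bar>)"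
proof -
  have "(\<Sum>l\<in>I. \<Sum>j=1..Suc K. \<bar>diag_coeff c r l j\<bar>) = (\<Sum>l\<in>I. \<Sum>j=2..Suc K. \<bar>c l (j - 1)\<bar> * \<bar>r l\<bar>)"
    unfolding diag_coeff_def by (intro sum.cong refl sum.mono_neutral_cong_right) (auto simp: abs_mult)
  also have "\<dots> = (\<Sum>l\<in>I. \<Sum>j=1..K. \<bar>c l j\<bar> * \<bar>r l\<bar>)"
    by (simp only: numeral_2_eq_2 sum.shift_bounds_cl_Suc_ivl One_nat_def) simp
  also have "\<dots> \<le> (\<Sum>l\<in>I. \<Sum>j=1..K. \<bar>c l j\<bar> * (\<Sum>m\<in>I. \<bar>r m\<bar>))"
    using assms by (intro sum_mono mult_left_mono member_le_sum[where f = "\<lambda>m. \<bar>r m\<bar>"]) auto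
  finally show ?thesis by (simp add: coeff_mass_def sum_distrib_right)
qed

lemma cross_coeff_mass:
  assumes "finite I" and sep: "\<And>l m. l \<in> I \<Longrightarrow> m \<in> I \<Longrightarrow> m \<noteq> l \<Longrightarrow> 1 \<le> \<bar>x m - x l\<bar>"
  shows "(\<Sum>m\<in>I. \<Sum>j=1..Suc K. \<bar>cross_coeff I x K c r m j\<bar>) \<le> coeff_mass I K c * (\<Sum>m\<in>I. \<bar>r m\<bar>)"
proof -
  have cross_1: "\<bar>cross_coeff I x K c r m 1\<bar> \<le> coeff_mass I K c * \<bar>r m\<bar>" if m: "m \<in> I" for m
  proof -
    have "\<bar>cross_coeff I x K c r m 1\<bar>
        \<le> (\<Sum>l\<in>I. \<Sum>i=1..K. \<bar>if m \<noteq> l then c l i * r m / (x m - x l)^i else 0\<bar>)"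
      unfolding cross_coeff_def by (auto intro: order_trans[OF sum_abs] sum_mono sum_abs)
    also have "\<dots> \<le> (\<Sum>l\<in>I. \<Sum>i=1..K. \<bar>c l i\<bar> * \<bar>r m\<bar>)"
      by (intro sum_mono abs_if_div_power_le) (use sep m in auto)
    finally show ?thesis by (simp add: coeff_mass_def sum_distrib_right)
  qed
  then have "(\<Sum>m\<in>I. \<Sum>j=1..Suc K. \<bar>cross_coeff I x K c r m j\<bar>) \<le> (\<Sum>m\<in>I. coeff_mass I K c * \<bar>r m\<bar>)"
  proof (intro sum_mono)
    fix m assume "m \<in> I"
    have "(\<Sum>j=1..Suc K. \<bar>cross_coeff I x K c r m j\<bar>) = (\<Sum>j\<in>{1}. \<bar>cross_coeff I x K c r m j\<bar>)"
      by (rule sum.mono_neutral_right) (auto simp: cross_coeff_def)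
    then show "(\<Sum>j=1..Suc K. \<bar>cross_coeff I x K c r m j\<bar>) \<le> coeff_mass I K c * \<bar>r m\<bar>"
      using cross_1[OF \<open>m \<in> I\<close>] by simp
  qed
  then show ?thesis by (simp add: sum_distrib_left)
qed

lemma tail_coeff_mass:
  assumes "finite I" and sep: "\<And>l m. l \<in> I \<Longrightarrow> m \<in> I \<Longrightarrow> m \<noteq> l \<Longrightarrow> 1 \<le> \<bar>x m - x l\<bar>"
  shows "(\<Sum>l\<in>I. \<Sum>j=1..Suc K. \<bar>tail_coeff I x K c r l j\<bar>)
      \<le> Suc K * (coeff_mass I K c * (\<Sum>m\<in>I. \<bar>r m\<bar>))"
proof -
  have "\<bar>tail_coeff I x K c r l j\<bar> \<le> (\<Sum>i=1..K. \<bar>c l i\<bar>) * (\<Sum>m\<in>I. \<bar>r m\<bar>)" if l: "l \<in> I" for l j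
  proof -
    have "\<bar>tail_coeff I x K c r l j\<bar> \<le> (\<Sum>m\<in>I. \<Sum>i=1..K.
        \<bar>if m \<noteq> l \<and> j \<le> i then c l i * r m / (x m - x l)^(i - j + 1) else 0\<bar>)"
      unfolding tail_coeff_def by (auto intro: order_trans[OF sum_abs] sum_mono sum_abs)
    also have "\<dots> \<le> (\<Sum>m\<in>I. \<Sum>i=1..K. \<bar>c l i\<bar> * \<bar>r m\<bar>)"
      by (intro sum_mono abs_if_div_power_le) (use sep l in auto)
    finally show ?thesis by (simp add: sum_distrib_left sum_distrib_right sum.swap[of _ I])
  qed
  then have "(\<Sum>l\<in>I. \<Sum>j=1..Suc K. \<bar>tail_coeff I x K c r l j\<bar>)
      \<le> (\<Sum>l\<in>I. \<Sum>j=1..Suc K. (\<Sum>i=1..K. \<bar>c l i\<bar>) * (\<Sum>m\<in>I. \<bar>r m\<bar>))"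
    by (intro sum_mono) auto
  then show ?thesis by (simp add: coeff_mass_def sum_distrib_left sum_distrib_right mult_ac)
qed

lemma mult_coeff_mass:
  assumes fin: "finite I" and sep: "\<And>l m. l \<in> I \<Longrightarrow> m \<in> I \<Longrightarrow> m \<noteq> l \<Longrightarrow> 1 \<le> \<bar>x m - x l\<bar>"
  shows "coeff_mass I (Suc K) (mult_coeff I x K c r) \<le> (real K + 3) * coeff_mass I K c * (\<Sum>m\<in>I. \<bar>r m\<bar>)"
proof -
  have "coeff_mass I (Suc K) (mult_coeff I x K c r) \<le> (\<Sum>l\<in>I. \<Sum>j=1..Suc K.
      \<bar>diag_coeff c r l j\<bar> + \<bar>cross_coeff I x K c r l j\<bar> + \<bar>tail_coeff I x K c r l j\<bar>)"
    unfolding coeff_mass_def by (intro sum_mono) (auto simp: mult_coeff_def)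
  also have "\<dots> = (\<Sum>l\<in>I. \<Sum>j=1..Suc K. \<bar>diag_coeff c r l j\<bar>)
      + (\<Sum>l\<in>I. \<Sum>j=1..Suc K. \<bar>cross_coeff I x K c r l j\<bar>)
      + (\<Sum>l\<in>I. \<Sum>j=1..Suc K. \<bar>tail_coeff I x K c r l j\<bar>)"
    by (simp only: sum.distrib)
  also have "\<dots> \<le> (real K + 3) * coeff_mass I K c * (\<Sum>m\<in>I. \<bar>r m\<bar>)"
    using diag_coeff_mass[OF fin, where K = K and c = c and r = r]
      cross_coeff_mass[where x = x and K = K and c = c and r = r, OF fin sep]
      tail_coeff_mass[where x = x and K = K and c = c and r = r, OF fin sep]
    by (simp only: of_nat_Suc of_nat_add) (simp add: algebra_simps)
  finally show ?thesis .
qed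

text \<open>After multiplying by \<open>(t - x l0)^J\<close>, a sum whose
  coefficients at \<open>x l0\<close> vanish above order \<open>J\<close> becomes a polynomial in \<open>t - x l0\<close>
  with constant term \<open>A l0 J\<close>, plus terms that are continuous and vanish at \<open>x l0\<close>.\<close>

lemma pf_times_pole_power:
  assumes "finite I" "l0 \<in> I" "t \<noteq> x l0" "J \<le> K" and higher: "\<And>j. J < j \<Longrightarrow> j \<le> K \<Longrightarrow> A l0 j = 0"
  shows "(t - x l0)^J * pf I x K A t =
      (\<Sum>j=1..J. A l0 j * (t - x l0)^(J - j)) + (\<Sum>j=1..K. \<Sum>l\<in>I-{l0}. A l j * (t - x l0)^J / (t - x l)^j)"
proof -
  have "(t - x l0)^J * pf I x K A t
      = (\<Sum>j=1..K. A l0 j * (t - x l0)^J / (t - x l0)^j) + (\<Sum>j=1..K. \<Sum>l\<in>I-{l0}. A l j * (t - x l0)^J / (t - x l)^j)"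
    using assms(1,2) by (simp add: pf_def sum.remove sum.distrib distrib_left sum_distrib_left mult_ac)
  also have "(\<Sum>j=1..K. A l0 j * (t - x l0)^J / (t - x l0)^j) = (\<Sum>j=1..J. A l0 j * (t - x l0)^J / (t - x l0)^j)"
    using assms(4) higher by (intro sum.mono_neutral_cong_right) auto
  also have "\<dots> = (\<Sum>j=1..J. A l0 j * (t - x l0)^(J - j))"
  proof (intro sum.cong refl)
    fix j assume "j \<in> {1..J}"
    then have "(t - x l0)^J = (t - x l0)^(J - j) * (t - x l0)^j" by (simp flip: power_add)
    then show "A l0 j * (t - x l0)^J / (t - x l0)^j = A l0 j * (t - x l0)^(J - j)"
      using assms(3) by simp
  qed
  finally show ?thesis .
qed

lemma pf_zero_top_coeff:
  assumes fin: "finite I" and inj: "inj_on x I"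
    and zero: "\<And>t. t \<notin> x ` I \<Longrightarrow> pf I x K A t = 0"
    and l0: "l0 \<in> I" and J: "1 \<le> J" "J \<le> K"
    and higher: "\<And>j. J < j \<Longrightarrow> j \<le> K \<Longrightarrow> A l0 j = 0"
  shows "A l0 J = 0"
proof -
  define h where "h = (\<lambda>t. (\<Sum>j=1..J. A l0 j * (t - x l0)^(J - j))
      + (\<Sum>j=1..K. \<Sum>l\<in>I-{l0}. A l j * (t - x l0)^J / (t - x l)^j))"
  have "eventually (\<lambda>t. \<forall>y\<in>x ` I. t \<noteq> y) (at (x l0))"
    using fin by (intro eventually_ball_finite) (auto intro: eventually_neq_at_within)
  then have "eventually (\<lambda>t. h t = 0) (at (x l0))"
  proof (rule eventually_mono)
    fix t assume "\<forall>y\<in>x ` I. t \<noteq> y"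
    then have t: "t \<notin> x ` I" and "t \<noteq> x l0" using l0 by auto
    then show "h t = 0"
      using pf_times_pole_power[where x = x and A = A and t = t, OF fin l0 _ J(2) higher] zero[OF t]
      by (simp add: h_def)
  qed
  then have "(h \<longlongrightarrow> 0) (at (x l0))" by (rule tendsto_eventually)
  moreover have "isCont h (x l0)"
    unfolding h_def using l0 inj by (intro continuous_intros) (auto dest: inj_onD)
  ultimately have "h (x l0) = 0"
    by (metis LIM_unique isCont_def trivial_limit_at)
  moreover have "h (x l0) = A l0 J"
  proof -
    have "(\<Sum>j=1..J. A l0 j * (x l0 - x l0)^(J - j)) = (\<Sum>j=1..J. if j = J then A l0 J else 0)"
      by (intro sum.cong refl) auto
    then show ?thesis using J by (simp add: h_def power_0_left)
  qed
  ultimately show ?thesis by simp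
qed

lemma pf_zero_coeffs:
  assumes "finite I" and "inj_on x I"
    and "\<And>t. t \<notin> x ` I \<Longrightarrow> pf I x K A t = 0"
    and "l \<in> I" "1 \<le> J" "J \<le> K"
  shows "A l J = 0"
  using assms(5,6)
proof (induction "K - J" arbitrary: J rule: less_induct)
  case less
  show ?case
    by (rule pf_zero_top_coeff[OF assms(1-4) less.prems]) (use less.hyps in auto)
qed

lemma lagrange_interpolation:
  fixes N :: "real poly"
  assumes fin: "finite I" and inj: "inj_on x I" and deg: "degree N < card I"
  shows "N = (\<Sum>l\<in>I. smult (poly N (x l) / (\<Prod>l'\<in>I-{l}. (x l - x l'))) (\<Prod>l'\<in>I-{l}. [:-x l', 1:]))"
    (is "N = ?L")
proof (rule poly_eqI_degree[of "x ` I"])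
  have node: "(\<Prod>l'\<in>I-{l}. (x m - x l')) = 0" if "l \<in> I" "m \<in> I" "l \<noteq> m" for l m
    using that fin by (intro prod_zero) auto
  have nonzero: "(\<Prod>l'\<in>I-{m}. (x m - x l')) \<noteq> 0" if "m \<in> I" for m
    using that fin inj by (subst prod_zero_iff) (auto dest: inj_onD)
  show "poly N s = poly ?L s" if "s \<in> x ` I" for s
  proof -
    obtain m where m: "m \<in> I" "s = x m" using \<open>s \<in> x ` I\<close> by blast
    have "poly ?L (x m) = (\<Sum>l\<in>I. if l = m then poly N (x m) else 0)"
      unfolding poly_sum poly_smult poly_prod
      by (intro sum.cong refl) (use m nonzero node in auto)
    then show ?thesis using m fin by simp
  qed
  have "degree ?L \<le> card I - 1"
  proof (intro degree_sum_le fin)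
    fix l assume l: "l \<in> I"
    have "degree (\<Prod>l'\<in>I-{l}. [:-x l', 1:]) \<le> card (I - {l})"
      using degree_prod_sum_le[of "I - {l}" "\<lambda>l'. [:-x l', 1:]"] fin by simp
    then show "degree (smult (poly N (x l) / (\<Prod>l'\<in>I-{l}. (x l - x l'))) (\<Prod>l'\<in>I-{l}. [:-x l', 1:]))
        \<le> card I - 1"
      using l fin by (intro order_trans[OF degree_smult_le]) simp
  qed
  then show "degree ?L < card (x ` I)" using deg inj by (simp add: card_image)
  show "degree N < card (x ` I)" using deg inj by (simp add: card_image)
qed

lemma lagrange_pf:
  fixes N :: "real poly"
  assumes fin: "finite I" and inj: "inj_on x I" and deg: "degree N < card I" and t: "t \<notin> x ` I"
  shows "poly N t / (\<Prod>l\<in>I. (t - x l)) = sf I x (\<lambda>l. poly N (x l) / (\<Prod>l'\<in>I-{l}. (x l - x l'))) t"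
proof -
  define w where "w l = poly N (x l) / (\<Prod>l'\<in>I-{l}. (x l - x l'))" for l
  have "poly N t = (\<Sum>l\<in>I. w l * (\<Prod>l'\<in>I-{l}. (t - x l')))"
    by (subst lagrange_interpolation[OF fin inj deg]) (simp add: w_def poly_sum poly_prod)
  then have "poly N t / (\<Prod>l\<in>I. (t - x l)) = (\<Sum>l\<in>I. w l * (\<Prod>l'\<in>I-{l}. (t - x l')) / (\<Prod>l\<in>I. (t - x l)))"
    by (simp add: sum_divide_distrib)
  also have "\<dots> = (\<Sum>l\<in>I. w l / (t - x l))"
  proof (intro sum.cong refl)
    fix l assume l: "l \<in> I"
    have "(\<Prod>l\<in>I. (t - x l)) = (t - x l) * (\<Prod>l'\<in>I-{l}. (t - x l'))"
      using fin l by (simp add: prod.remove)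
    moreover have "(\<Prod>l'\<in>I-{l}. (t - x l')) \<noteq> 0" using fin t by (subst prod_zero_iff) auto
    ultimately show "w l * (\<Prod>l'\<in>I-{l}. (t - x l')) / (\<Prod>l\<in>I. (t - x l)) = w l / (t - x l)"
      by simp
  qed
  finally show ?thesis by (simp add: sf_def w_def)
qed

fun prod_coeff :: "'i set \<Rightarrow> ('i \<Rightarrow> real) \<Rightarrow> (nat \<Rightarrow> 'i \<Rightarrow> real) \<Rightarrow> nat \<Rightarrow> 'i \<Rightarrow> nat \<Rightarrow> real" where
  "prod_coeff I x rs 0 = (\<lambda>l j. if l \<in> I \<and> j = 1 then rs 0 l else 0)"
| "prod_coeff I x rs (Suc k) = mult_coeff I x (Suc k) (prod_coeff I x rs k) (rs (Suc k))"

lemma pf_prod_coeff: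
  assumes "inj_on x I" "t \<notin> x ` I"
  shows "pf I x (Suc k) (prod_coeff I x rs k) t = (\<Prod>i<Suc k. sf I x (rs i) t)"
proof (induction k)
  case 0
  show ?case by (simp add: pf_def sf_def)
next
  case (Suc k)
  then show ?case by (simp add: pf_mult_coeff[OF assms])
qed

lemma prod_coeff_support: "prod_coeff I x rs k l j \<noteq> 0 \<Longrightarrow> l \<in> I \<and> j \<in> {1..Suc k}"
  by (cases k) (auto simp: mult_coeff_def split: if_splits)

lemma prod_coeff_integral:
  assumes "\<And>i l. l \<in> I \<Longrightarrow> rs i l \<in> \<int>"
    and "\<And>l m. l \<in> I \<Longrightarrow> m \<in> I \<Longrightarrow> m \<noteq> l \<Longrightarrow> D / (x m - x l) \<in> \<int>"
  shows "scaled_integral D (Suc k) (prod_coeff I x rs k)"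
proof (induction k)
  case 0
  show ?case using assms(1) by (simp add: scaled_integral_def)
next
  case (Suc k)
  then show ?case using assms by (simp add: mult_coeff_integral)
qed

lemma prod_coeff_mass:
  assumes "finite I" and "\<And>l m. l \<in> I \<Longrightarrow> m \<in> I \<Longrightarrow> m \<noteq> l \<Longrightarrow> 1 \<le> \<bar>x m - x l\<bar>"
  shows "coeff_mass I (Suc k) (prod_coeff I x rs k)
      \<le> (\<Prod>i=1..k. real i + 3) * (\<Prod>i<Suc k. \<Sum>l\<in>I. \<bar>rs i l\<bar>)"
proof (induction k)
  case 0
  show ?case by (simp add: coeff_mass_def)
next
  case (Suc k)
  have "coeff_mass I (Suc (Suc k)) (prod_coeff I x rs (Suc k))
      \<le> (real (Suc k) + 3) * coeff_mass I (Suc k) (prod_coeff I x rs k) * (\<Sum>l\<in>I. \<bar>rs (Suc k) l\<bar>)"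
    unfolding prod_coeff.simps by (rule mult_coeff_mass[OF assms])
  also have "\<dots> \<le> (real (Suc k) + 3) * ((\<Prod>i=1..k. real i + 3) * (\<Prod>i<Suc k. \<Sum>l\<in>I. \<bar>rs i l\<bar>))
      * (\<Sum>l\<in>I. \<bar>rs (Suc k) l\<bar>)"
    by (intro mult_right_mono mult_left_mono Suc.IH) (auto intro: sum_nonneg)
  also have "\<dots> = (\<Prod>i=1..Suc k. real i + 3) * (\<Prod>i<Suc (Suc k). \<Sum>l\<in>I. \<bar>rs i l\<bar>)"
    by (simp add: prod.nat_ivl_Suc' mult_ac)
  finally show ?case .
qed

lemma prod_left_gaps:
  fixes l c :: int
  assumes "c \<le> l"
  shows "(\<Prod>l'\<in>{c..l-1}. l - l') = fact (nat (l - c))"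
proof -
  have "(\<Prod>l'\<in>{c..l-1}. l - l') = (\<Prod>u\<in>{1..nat (l - c)}. int u)"
    by (rule prod.reindex_bij_witness[where i = "\<lambda>u. l - int u" and j = "\<lambda>l'. nat (l - l')"])
      (use assms in auto)
  then show ?thesis by (simp add: fact_prod)
qed

lemma prod_right_gaps:
  fixes l c :: int
  assumes "l \<le> c"
  shows "(\<Prod>l'\<in>{l+1..c}. l' - l) = fact (nat (c - l))"
proof -
  have "(\<Prod>l'\<in>{l+1..c}. l' - l) = (\<Prod>u\<in>{1..nat (c - l)}. int u)"
    by (rule prod.reindex_bij_witness[where i = "\<lambda>u. l + int u" and j = "\<lambda>l'. nat (l' - l)"])
      (use assms in auto)
  then show ?thesis by (simp add: fact_prod)
qed

lemma prod_blocks: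
  fixes g :: "nat \<Rightarrow> real"
  shows "(\<Prod>L\<in>{c<..c+p*q}. g L) = (\<Prod>i<q. \<Prod>k<p. g (c + p*i + 1 + k))"
proof (induction q)
  case (Suc q)
  have "{c<..c+p*Suc q} = {c<..c+p*q} \<union> {c+p*q<..c+p*q+p}" by auto
  then have "(\<Prod>L\<in>{c<..c+p*Suc q}. g L) = (\<Prod>L\<in>{c<..c+p*q}. g L) * (\<Prod>L\<in>{c+p*q<..c+p*q+p}. g L)"
    by (simp add: prod.union_disjoint[symmetric] ivl_disj_int)
  also have "(\<Prod>L\<in>{c+p*q<..c+p*q+p}. g L) = (\<Prod>k<p. g (c + p*q + 1 + k))"
    by (rule prod.reindex_bij_witness[where i = "\<lambda>k. c + p*q + 1 + k" and j = "\<lambda>L. L - (c + p*q) - 1"])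
      auto
  finally show ?case using Suc by simp
qed simp

lemma prod_greaterThanAtMost_fact: "(\<Prod>L\<in>{c<..c+N}. real L) = fact (c + N) / fact c"
proof (induction N)
  case (Suc N)
  have "{c<..c + Suc N} = insert (Suc (c + N)) {c<..c+N}" by auto
  then have "(\<Prod>L\<in>{c<..c + Suc N}. real L) = real (Suc (c + N)) * (fact (c + N) / fact c)"
    using Suc.IH by simp
  then show ?case by simp
qed simp

text \<open>A single term of the binomial expansion of \<open>N^N = (k + (N - k))^N\<close>, and the resulting
  bound for multinomial coefficients.\<close>

lemma binomial_term_bound:
  assumes "k \<le> N"
  shows "real (N choose k) * real k ^ k * real (N - k) ^ (N - k) \<le> real N ^ N"
proof -
  have "real N ^ N = (\<Sum>i\<le>N. real (N choose i) * real k ^ i * real (N - k) ^ (N - i))"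
    using assms by (simp flip: binomial_ring)
  also have "\<dots> \<ge> real (N choose k) * real k ^ k * real (N - k) ^ (N - k)"
    by (rule member_le_sum[where f = "\<lambda>i. real (N choose i) * real k ^ i * real (N - k) ^ (N - i)"])
      (use assms in auto)
  finally show ?thesis .
qed

lemma multinomial_power_bound:
  "fact (K + q*m) * (real K ^ K * real m ^ (q*m)) \<le> real (K + q*m) ^ (K + q*m) * (fact K * fact m ^ q)"
proof (induction q)
  case (Suc q)
  define N where "N = K + q*m + m"
  have N: "K + Suc q * m = N" "N - m = K + q*m" "m \<le> N" by (auto simp: N_def)
  have "real (fact N) = real (fact m * fact (N - m) * (N choose m))"
    using binomial_fact_lemma[OF N(3)] by simp
  then have "fact N = real (N choose m) * fact m * fact (K + q*m)"
    by (simp add: N(2))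
  then have "fact N * (real K ^ K * real m ^ (Suc q * m))
      = real (N choose m) * real m ^ m * fact m * (fact (K + q*m) * (real K ^ K * real m ^ (q*m)))"
    by (simp add: power_add ac_simps)
  also have "\<dots> \<le> real (N choose m) * real m ^ m * fact m * (real (K + q*m) ^ (K + q*m) * (fact K * fact m ^ q))"
    by (intro mult_left_mono Suc.IH) auto
  also have "\<dots> = (real (N choose m) * real m ^ m * real (N - m) ^ (N - m)) * (fact K * fact m ^ Suc q)"
    unfolding N(2) by (simp add: ac_simps)
  also have "\<dots> \<le> real N ^ N * (fact K * fact m ^ Suc q)"
    by (intro mult_right_mono binomial_term_bound N(3)) auto
  finally show ?case by (simp only: N(1))
qed simp


lemma central_binomial_row:
  "(\<Sum>l\<in>{-int n..int n}. fact (2*n) / (fact (nat (int n + l)) * fact (nat (int n - l)))) = (4::real)^n"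
proof -
  have "(\<Sum>l\<in>{-int n..int n}. fact (2*n) / (fact (nat (int n + l)) * fact (nat (int n - l))))
      = (\<Sum>u\<le>2*n. fact (2*n) / (fact u * fact (2*n - u)) :: real)"
    by (rule sum.reindex_bij_witness[where i = "\<lambda>u. int u - int n" and j = "\<lambda>l. nat (int n + l)"])
      (auto intro!: arg_cong[where f = "fact :: nat \<Rightarrow> real"])
  also have "\<dots> = (\<Sum>u\<le>2*n. real (2*n choose u))"
    by (intro sum.cong refl) (simp add: binomial_fact)
  also have "\<dots> = 4^n"
    by (simp flip: of_nat_sum add: choose_row_sum power_mult)
  finally show ?thesis .
qed

lemma power_ratio_exp:
  fixes a b d n :: nat
  assumes "d > 0"
  shows "4^(a*n) * (real (2*n*(d+b)) ^ (2*n*(d+b)) / (real (2*n*d) ^ (2*n*d) * real (2*n) ^ (2*n*b)))^2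
    = exp ((2 * real a * ln 2 + 4 * real (b + d) * ln (real (b + d)) - 4 * real d * ln (real d)) * real n)"
proof -
  have split: "real (2*n) ^ (2*n*(d+b)) = real (2*n) ^ (2*n*d) * real (2*n) ^ (2*n*b)"
    by (simp add: power_add distrib_left)
  have "real (2*n*(d+b)) ^ (2*n*(d+b)) / (real (2*n*d) ^ (2*n*d) * real (2*n) ^ (2*n*b))
      = real (d+b) ^ (2*n*(d+b)) / real d ^ (2*n*d)"
  proof (cases "n = 0")
    case False
    then show ?thesis
      by (simp only: of_nat_mult[of "2*n"] power_mult_distrib split) (simp add: field_simps)
  qed simp
  moreover have "exp (real (a*n) * ln 4 + real (4*n*(d+b)) * ln (real (d+b)) - real (4*n*d) * ln (real d))
      = (4::real)^(a*n) * (real (d+b) ^ (2*n*(d+b)) / real d ^ (2*n*d))^2"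
  proof -
    have exp_ln: "exp (real k * ln y) = y ^ k" if "y > 0" for k and y :: real
      using that by (simp add: exp_of_nat_mult)
    have "(real (d+b) ^ (2*n*(d+b)))^2 = real (d+b) ^ (4*n*(d+b))"
      "(real d ^ (2*n*d))^2 = real d ^ (4*n*d)"
      unfolding power_mult[symmetric] by (simp_all add: mult_ac)
    then show ?thesis
      using assms by (simp only: exp_diff exp_add exp_ln) (simp add: power_divide)
  qed
  moreover have "ln (4::real) = 2 * ln 2"
    using ln_realpow[of 2 2] by simp
  ultimately show ?thesis by (simp add: algebra_simps)
qed

lemma eventually_log_growth:
  fixes f :: "nat \<Rightarrow> real"
  assumes bound: "\<And>n. n \<ge> 1 \<Longrightarrow> \<bar>f n\<bar> \<le> real n * G * exp (C * real n)"
    and G: "G > 0" and C: "C \<ge> 0" and \<epsilon>: "\<epsilon> > 0"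
  shows "\<forall>\<^sub>F n in sequentially. ln \<bar>f n\<bar> / real n \<le> C + \<epsilon>"
proof -
  have "(\<lambda>n. ln G / real n + ln (real n) / real n) \<longlonglongrightarrow> 0"
    by real_asymp
  then have "\<forall>\<^sub>F n in sequentially. ln G / real n + ln (real n) / real n < \<epsilon>"
    using \<epsilon> by (intro order_tendstoD(2)) auto
  then show ?thesis
    using eventually_ge_at_top[of 1]
  proof eventually_elim
    case (elim n)
    then have n: "real n > 0" by simp
    show ?case
    proof (cases "f n = 0")
      case False
      have "ln \<bar>f n\<bar> \<le> ln (real n * G * exp (C * real n))"
        using bound[OF elim(2)] False G n by simp
      also have "\<dots> = (ln G / real n + ln (real n) / real n + C) * real n"
        using G n by (simp add: ln_mult field_simps)
      also have "\<dots> \<le> (C + \<epsilon>) * real n"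
        using elim(1) n by (intro mult_right_mono) auto
      finally show ?thesis using n by (simp add: divide_le_eq)
    qed (use C \<epsilon> in simp)
  qed
qed


definition growth_rate :: "nat \<Rightarrow> nat \<Rightarrow> nat \<Rightarrow> real" where
  "growth_rate d a b = 2 * real a * ln 2 + 4 * real (b + d) * ln (real (b + d)) - 4 * real d * ln (real d)"

lemma growth_rate_nonneg:
  assumes "d > 0"
  shows "growth_rate d a b \<ge> 0"
proof -
  have "real d * ln (real d) \<le> real (b + d) * ln (real (b + d))"
    using assms by (intro mult_mono) auto
  moreover have "0 \<le> real a * ln 2" by simp
  ultimately show ?thesis unfolding growth_rate_def by linarith
qed

definition mass_factor :: "nat \<Rightarrow> real" where
  "mass_factor a = (\<Prod>i=1..a-1. real i + 3)"

lemma mass_factor_pos: "mass_factor a > 0"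
  by (simp add: mass_factor_def prod_pos)

text \<open>The numerator \<open>Np i\<close> of the \<open>i\<close>-th factor is the \<open>i\<close>-th block of \<open>2n\<close> factors
  \<open>t - L\<close> of \<open>Q_n\<close> for \<open>i < b\<close>, the corresponding block of factors \<open>t + L\<close> for
  \<open>b \<le> i < 2b\<close>, and the constant \<open>(2n)!\<close> for the remaining \<open>a - 2b\<close> factors;
  \<open>r i\<close> are the residues of the \<open>i\<close>-th factor.\<close>

locale Pn_construction =
  fixes d a b n :: nat
  assumes d_pos: "d > 0" and a_pos: "a > 0" and two_b_le_a: "2 * b \<le> a" and n_pos: "n \<ge> 1"
begin

definition I :: "int set" where "I = {-int n..int n}"

definition x :: "int \<Rightarrow> real" where "x l = real d * of_int l"

definition s :: "nat \<Rightarrow> nat" where "s i = d*n + 2*n*i + 1"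

definition Np :: "nat \<Rightarrow> real poly" where
  "Np i = (if i < b then (\<Prod>k<2*n. [:-real (s i + k), 1:])
           else if i < 2*b then (\<Prod>k<2*n. [:real (s (i - b) + k), 1:])
           else [:fact (2*n):])"

definition r :: "nat \<Rightarrow> int \<Rightarrow> real" where
  "r i l = real d ^ (2*n) * poly (Np i) (x l) / (\<Prod>l'\<in>I-{l}. (x l - x l'))"

lemma finite_I [simp]: "finite I" and card_I: "card I = 2*n + 1"
  by (simp_all add: I_def)

lemma inj_x: "inj_on x I"
  using d_pos by (auto simp: inj_on_def x_def)

lemma poles_iff: "(\<forall>l\<in>{-int n..int n}. t \<noteq> real d * of_int l) \<longleftrightarrow> t \<notin> x ` I"
  by (auto simp: I_def x_def)

lemma degree_Np: "degree (Np i) \<le> 2*n"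
proof -
  have "degree (\<Prod>k<2*n. [:c k, 1:]) \<le> 2*n" for c :: "nat \<Rightarrow> real"
    by (rule order_trans[OF degree_prod_sum_le]) auto
  then show ?thesis by (simp add: Np_def)
qed

lemma factor_sf:
  assumes "t \<notin> x ` I"
  shows "real d ^ (2*n) * poly (Np i) t / (\<Prod>l\<in>I. (t - x l)) = sf I x (r i) t"
proof -
  have "poly (Np i) t / (\<Prod>l\<in>I. (t - x l)) = sf I x (\<lambda>l. poly (Np i) (x l) / (\<Prod>l'\<in>I-{l}. (x l - x l'))) t"
    using degree_Np[of i] by (intro lagrange_pf[OF finite_I inj_x _ assms]) (simp add: card_I)
  then have "real d ^ (2*n) * (poly (Np i) t / (\<Prod>l\<in>I. (t - x l)))
      = real d ^ (2*n) * sf I x (\<lambda>l. poly (Np i) (x l) / (\<Prod>l'\<in>I-{l}. (x l - x l'))) t"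
    by (simp only:)
  then show ?thesis by (simp add: sf_def r_def sum_distrib_left)
qed

lemma Qn_blocks:
  "Qn d b n t = (\<Prod>i<b. \<Prod>k<2*n. (t - real (s i + k))) * (\<Prod>i<b. \<Prod>k<2*n. (t + real (s i + k)))"
proof -
  have "(d + 2*b) * n = d*n + 2*n*b" by (simp add: algebra_simps)
  then have "Qn d b n t = (\<Prod>L\<in>{d*n<..d*n + 2*n*b}. (t - real L)) * (\<Prod>L\<in>{d*n<..d*n + 2*n*b}. (t + real L))"
    unfolding Qn_def by (simp add: prod.distrib)
  then show ?thesis by (simp only: prod_blocks) (simp add: s_def add.assoc)
qed

lemma prod_Np: "(\<Prod>i<a. poly (Np i) t) = Qn d b n t * fact (2*n) ^ (a - 2*b)"
proof -
  let ?f = "\<lambda>i. poly (Np i) t"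
  have "(\<Prod>i<a. ?f i) = prod ?f {0..<b} * prod ?f {b..<2*b} * prod ?f {2*b..<a}"
    using two_b_le_a by (simp add: atLeast0LessThan[symmetric] prod.atLeastLessThan_concat)
  also have "prod ?f {0..<b} = (\<Prod>i<b. \<Prod>k<2*n. (t - real (s i + k)))"
    by (intro prod.cong) (auto simp: Np_def poly_prod intro!: prod.cong)
  also have "prod ?f {b..<2*b} = (\<Prod>i<b. \<Prod>k<2*n. (t + real (s i + k)))"
    using prod.shift_bounds_nat_ivl[of ?f 0 b b]
    by (simp add: mult_2 atLeast0LessThan) (auto simp: Np_def poly_prod intro!: prod.cong)
  also have "prod ?f {2*b..<a} = fact (2*n) ^ (a - 2*b)"
    by (simp add: Np_def)
  finally show ?thesis by (simp add: Qn_blocks)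
qed

lemma Pn_factorization:
  assumes t: "t \<notin> x ` I"
  shows "Pn d a b n t = (\<Prod>i<a. sf I x (r i) t)"
proof -
  have "Rn d a n t = (\<Prod>l\<in>I. (t - x l)) ^ a" by (simp add: Rn_def I_def x_def)
  then have "Pn d a b n t = (\<Prod>i<a. real d ^ (2*n) * poly (Np i) t / (\<Prod>l\<in>I. (t - x l)))"
    by (simp add: Pn_def prod_Np prod_dividef prod.distrib power_mult[symmetric] mult_ac)
  then show ?thesis by (simp add: factor_sf[OF t])
qed

text \<open>By uniqueness, the coefficients of the statement are those of the iterated product.\<close>

lemma Acoef_eq: "Acoef d a b n = prod_coeff I x r (a - 1)"
proof -
  let ?c = "prod_coeff I x r (a - 1)"
  have a: "Suc (a - 1) = a" using a_pos by simp
  have pf_c: "Pn d a b n t = pf I x a ?c t" if "t \<notin> x ` I" for t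
  proof -
    have "pf I x (Suc (a - 1)) ?c t = (\<Prod>i<Suc (a - 1). sf I x (r i) t)"
      by (rule pf_prod_coeff[OF inj_x that])
    then show ?thesis unfolding a Pn_factorization[OF that] by simp
  qed
  have supp_c: "?c l j \<noteq> 0 \<Longrightarrow> l \<in> I \<and> j \<in> {1..a}" for l j
    using prod_coeff_support[of I x r "a - 1" l j] a by simp
  show ?thesis
    unfolding Acoef_def
  proof (rule the_equality)
    show "(\<forall>l j. ?c l j \<noteq> 0 \<longrightarrow> l \<in> {-int n..int n} \<and> j \<in> {1..a}) \<and>
       (\<forall>t. (\<forall>l\<in>{-int n..int n}. t \<noteq> real d * of_int l) \<longrightarrow>
          Pn d a b n t = (\<Sum>j=1..a. \<Sum>l\<in>{-int n..int n}. ?c l j / (t - real d * of_int l) ^ j))"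
      using supp_c pf_c by (auto simp: poles_iff pf_def I_def x_def)
  next
    fix A assume "(\<forall>l j. A l j \<noteq> 0 \<longrightarrow> l \<in> {-int n..int n} \<and> j \<in> {1..a}) \<and>
       (\<forall>t. (\<forall>l\<in>{-int n..int n}. t \<noteq> real d * of_int l) \<longrightarrow>
          Pn d a b n t = (\<Sum>j=1..a. \<Sum>l\<in>{-int n..int n}. A l j / (t - real d * of_int l) ^ j))"
    then have supp_A: "A l j \<noteq> 0 \<Longrightarrow> l \<in> I \<and> j \<in> {1..a}"
      and pf_A: "t \<notin> x ` I \<Longrightarrow> Pn d a b n t = pf I x a A t" for l j t
      by (auto simp: poles_iff pf_def I_def x_def)
    have "pf I x a (\<lambda>l j. A l j - ?c l j) t = 0" if "t \<notin> x ` I" for t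
      using pf_A[OF that] pf_c[OF that] by (simp add: pf_def diff_divide_distrib sum_subtractf)
    then have "A l j - ?c l j = 0" if "l \<in> I" "j \<in> {1..a}" for l j
      using pf_zero_coeffs[OF finite_I inj_x, of a "\<lambda>l j. A l j - ?c l j" l j] that by auto
    then show "A = ?c"
      using supp_A supp_c by (intro ext) (metis eq_iff_diff_eq_0)
  qed
qed

text \<open>The residues are integers: \<open>r i l = Nint i l / W l\<close> where \<open>W l\<close> divides \<open>(2n)!\<close>
  and \<open>(2n)!\<close> divides the product \<open>Nint i l\<close> of \<open>2n\<close> consecutive integers.\<close>

definition W :: "int \<Rightarrow> int" where "W l = (\<Prod>l'\<in>I-{l}. (l - l'))"

definition Nint :: "nat \<Rightarrow> int \<Rightarrow> int" where
  "Nint i l = (if i < b then (\<Prod>k<2*n. int d * l - int (s i + k))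
           else if i < 2*b then (\<Prod>k<2*n. int d * l + int (s (i - b) + k))
           else fact (2*n))"

lemma r_eq: "l \<in> I \<Longrightarrow> r i l = of_int (Nint i l) / of_int (W l)"
proof -
  assume l: "l \<in> I"
  have "(\<Prod>l'\<in>I-{l}. (x l - x l')) = (\<Prod>l'\<in>I-{l}. real d * of_int (l - l'))"
    by (simp add: x_def algebra_simps)
  also have "\<dots> = real d ^ (2*n) * of_int (W l)"
    using l by (simp add: prod.distrib W_def card_I)
  finally show ?thesis
    using d_pos by (auto simp: r_def Np_def Nint_def poly_prod x_def intro!: prod.cong)
qed

lemma abs_W: "l \<in> I \<Longrightarrow> \<bar>W l\<bar> = fact (nat (int n + l)) * fact (nat (int n - l))"
proof -
  assume l: "l \<in> I"
  then have split: "I - {l} = {-int n..l-1} \<union> {l+1..int n}" by (auto simp: I_def)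
  have "\<bar>W l\<bar> = (\<Prod>l'\<in>{-int n..l-1}. \<bar>l - l'\<bar>) * (\<Prod>l'\<in>{l+1..int n}. \<bar>l - l'\<bar>)"
    unfolding W_def abs_prod split by (rule prod.union_disjoint) auto
  also have "\<dots> = (\<Prod>l'\<in>{-int n..l-1}. l - l') * (\<Prod>l'\<in>{l+1..int n}. l' - l)"
    by (intro arg_cong2[where f = "(*)"] prod.cong) auto
  finally show ?thesis
    using l prod_left_gaps[of "-int n" l] prod_right_gaps[of l "int n"] by (simp add: I_def add.commute)
qed

lemma fact_dvd_Nint: "fact (2*n) dvd Nint i l"
proof -
  have "(\<Prod>k<2*n. int d * l - int (s i + k)) = pochhammer (int (s i) - int d * l) (2*n)"
  proof -
    have "(\<Prod>k<2*n. int d * l - int (s i + k)) = (\<Prod>k<2*n. - (int (s i) - int d * l + int k))"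
      by (intro prod.cong refl) auto
    also have "\<dots> = (\<Prod>k<2*n. int (s i) - int d * l + int k)"
      by (subst prod_uminus) simp
    finally show ?thesis by (simp add: pochhammer_prod atLeast0LessThan)
  qed
  moreover have "(\<Prod>k<2*n. int d * l + int (s (i - b) + k)) = pochhammer (int d * l + int (s (i - b))) (2*n)"
    by (simp add: pochhammer_prod atLeast0LessThan add.assoc)
  ultimately show ?thesis
    unfolding Nint_def by (auto simp: fact_dvd_pochhammer)
qed

lemma W_dvd_fact: "l \<in> I \<Longrightarrow> W l dvd fact (2*n)"
proof -
  assume l: "l \<in> I"
  then have "nat (int n + l) + nat (int n - l) = 2*n" by (auto simp: I_def)
  then have "fact (nat (int n + l)) * fact (nat (int n - l)) dvd (fact (2*n) :: int)"
    by (metis fact_fact_dvd_fact of_nat_dvd_iff of_nat_fact of_nat_mult)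
  then show ?thesis using abs_W[OF l] by (metis abs_dvd_iff)
qed

lemma r_Ints: "l \<in> I \<Longrightarrow> r i l \<in> \<int>"
proof -
  assume l: "l \<in> I"
  have "W l dvd Nint i l" using W_dvd_fact[OF l] fact_dvd_Nint by (rule dvd_trans)
  then show ?thesis by (simp add: r_eq[OF l] of_int_div[symmetric])
qed

text \<open>\<open>D = lcm{1..2dn}\<close> is a multiple of every pole distance, hence the coefficients are
  \<open>D\<close>-integral of order \<open>a\<close>.\<close>

definition D :: real where "D = real (Dlcm (2*d*n))"

lemma D_Ints: "D \<in> \<int>"
  by (simp add: D_def)

lemma D_div_Ints:
  fixes z :: int
  assumes "z \<noteq> 0" "\<bar>z\<bar> \<le> 2*d*n"
  shows "D / of_int z \<in> \<int>"
proof -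
  have "int (nat \<bar>z\<bar>) \<le> int (2*d*n)" using assms(2) by simp
  then have "nat \<bar>z\<bar> \<in> {1..2*d*n}" using assms(1) by (simp only: of_nat_le_iff) auto
  then have "nat \<bar>z\<bar> dvd Dlcm (2*d*n)"
    unfolding Dlcm_def by (rule dvd_Lcm)
  then have "z dvd int (Dlcm (2*d*n))"
    by (metis abs_dvd_iff int_nat_eq abs_ge_zero of_nat_dvd_iff)
  then have "D / of_int z = of_int (int (Dlcm (2*d*n)) div z)" by (simp add: D_def of_int_div)
  then show ?thesis by simp
qed

lemma D_div_x: "l \<in> I \<Longrightarrow> m \<in> I \<Longrightarrow> m \<noteq> l \<Longrightarrow> D / (x m - x l) \<in> \<int>"
proof -
  assume "l \<in> I" "m \<in> I" "m \<noteq> l"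
  then have "\<bar>int d * (m - l)\<bar> \<le> int d * (2 * int n)" "int d * (m - l) \<noteq> 0"
    using d_pos by (auto simp: I_def abs_mult intro!: mult_left_mono)
  then have "D / of_int (int d * (m - l)) \<in> \<int>" by (intro D_div_Ints) (auto simp: algebra_simps)
  then show ?thesis by (simp add: x_def algebra_simps)
qed

lemma Acoef_integral: "scaled_integral D a (Acoef d a b n)"
  using prod_coeff_integral[of I r D x "a - 1"] r_Ints D_div_x a_pos by (simp add: Acoef_eq)

lemma Aj_integral:
  assumes "1 \<le> j" "j \<le> a"
  shows "real (Dlcm (2*d*n)) ^ a * Aj d a b j n \<in> \<int>"
proof -
  have "D ^ a = D ^ j * D ^ (a - j)" using assms by (simp flip: power_add)
  then have "D ^ a * Aj d a b j n = (\<Sum>l\<in>I. D ^ j * (D ^ (a - j) * Acoef d a b n l j))"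
    by (simp add: Aj_def I_def sum_distrib_left mult.assoc)
  also have "\<dots> \<in> \<int>"
    using assms by (intro Ints_sum Ints_mult[OF Ints_power[OF D_Ints] scaled_integralD[OF Acoef_integral]])
  finally show ?thesis by (simp only: D_def)
qed

text \<open>The inner sums of \<open>B_m\<close> have denominators \<open>(dk + m)^j\<close> with \<open>dk + m \<le> 2dn\<close>, so
  \<open>D^j\<close> clears them; this gives integrality of \<open>D^a B_m\<close>.\<close>

definition harmonic_tail :: "nat \<Rightarrow> nat \<Rightarrow> int \<Rightarrow> real" where
  "harmonic_tail m j l = (\<Sum>k\<in>{0..<nat (int n - l)}. 1 / (real d * real k + real m) ^ j)"

lemma Bm_eq: "Bm d a b m n = (\<Sum>j=1..a. \<Sum>l\<in>I. Acoef d a b n l j * harmonic_tail m j l)"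
  by (simp add: Bm_def harmonic_tail_def I_def)

lemma harmonic_tail_integral:
  assumes m: "1 \<le> m" "m \<le> d" and l: "l \<in> I"
  shows "D ^ j * harmonic_tail m j l \<in> \<int>"
proof -
  have "D ^ j * harmonic_tail m j l = (\<Sum>k\<in>{0..<nat (int n - l)}. (D / of_int (int d * int k + int m)) ^ j)"
    by (simp add: harmonic_tail_def sum_distrib_left power_divide)
  also have "\<dots> \<in> \<int>"
  proof (intro Ints_sum Ints_power D_div_Ints)
    fix k assume k: "k \<in> {0..<nat (int n - l)}"
    then have "k + 1 \<le> 2*n" using l by (auto simp: I_def)
    then have "d * k + m \<le> 2*d*n" using m mult_left_mono[of "k + 1" "2*n" d] by (simp add: algebra_simps)
    then have "int d * int k + int m \<le> int (2*d*n)" by (metis of_nat_add of_nat_le_iff of_nat_mult)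
    then show "\<bar>int d * int k + int m\<bar> \<le> int (2*d*n)" by simp
    have "0 \<le> int d * int k" by simp
    then show "int d * int k + int m \<noteq> 0" using m by linarith
  qed
  finally show ?thesis .
qed

lemma Bm_integral:
  assumes "1 \<le> m" "m \<le> d"
  shows "real (Dlcm (2*d*n)) ^ a * Bm d a b m n \<in> \<int>"
proof -
  have "D ^ a * Bm d a b m n = (\<Sum>j=1..a. \<Sum>l\<in>I.
      (D ^ (a - j) * Acoef d a b n l j) * (D ^ j * harmonic_tail m j l))"
    unfolding Bm_eq sum_distrib_left
    by (intro sum.cong refl) (simp add: mult_ac flip: power_add)
  also have "\<dots> \<in> \<int>"
    using assms
    by (intro Ints_sum Ints_mult[OF scaled_integralD[OF Acoef_integral] harmonic_tail_integral]) auto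
  finally show ?thesis by (simp only: D_def)
qed

text \<open>Size of the residues: \<open>|Nint i l| \<le> Nbound i\<close>, and summing
  \<open>1 / ((n+l)!(n-l)!)\<close> over \<open>l\<close> gives \<open>\<Sum>l |r i l| \<le> 4^n Nbound i / (2n)!\<close>.\<close>

definition block :: "nat \<Rightarrow> real" where
  "block i = (\<Prod>k<2*n. real (2*d*n + 2*n*i + 1 + k))"

definition Nbound :: "nat \<Rightarrow> real" where
  "Nbound i = (if i < b then block i else if i < 2*b then block (i - b) else fact (2*n))"

lemma abs_Nint_le:
  assumes l: "l \<in> I"
  shows "\<bar>real_of_int (Nint i l)\<bar> \<le> Nbound i"
proof -
  have dl: "\<bar>real d * of_int l\<bar> \<le> real d * real n"
    using l by (auto simp: I_def abs_mult abs_le_iff intro!: mult_left_mono)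
  have factor: "\<bar>real d * of_int l - \<sigma> * real (s j + k)\<bar> \<le> real (2*d*n + 2*n*j + 1 + k)"
    if "\<bar>\<sigma>\<bar> = 1" for \<sigma> :: real and j k
  proof -
    have "\<bar>real d * of_int l - \<sigma> * real (s j + k)\<bar> \<le> \<bar>real d * of_int l\<bar> + real (s j + k)"
      using abs_triangle_ineq4[of "real d * of_int l" "\<sigma> * real (s j + k)"] that by (simp add: abs_mult)
    then show ?thesis using dl by (simp add: s_def)
  qed
  have blocks: "(\<Prod>k<2*n. \<bar>real d * of_int l - \<sigma> * real (s j + k)\<bar>) \<le> block j"
    if "\<bar>\<sigma>\<bar> = 1" for \<sigma> :: real and j
    unfolding block_def by (intro prod_mono conjI abs_ge_zero factor that)
  consider "i < b" | "\<not> i < b" "i < 2*b" | "\<not> i < 2*b" by blast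
  then show ?thesis
  proof cases
    case 1
    then show ?thesis using blocks[of 1 i] by (simp add: Nint_def Nbound_def abs_prod)
  next
    case 2
    then show ?thesis using blocks[of "-1" "i - b"] by (simp add: Nint_def Nbound_def abs_prod algebra_simps)
  qed (simp add: Nint_def Nbound_def)
qed

lemma residue_mass: "(\<Sum>l\<in>I. \<bar>r i l\<bar>) \<le> 4^n * (Nbound i / fact (2*n))"
proof -
  have "(\<Sum>l\<in>I. \<bar>r i l\<bar>)
      \<le> (\<Sum>l\<in>I. Nbound i / fact (2*n) * (fact (2*n) / (fact (nat (int n + l)) * fact (nat (int n - l)))))"
  proof (intro sum_mono)
    fix l assume l: "l \<in> I"
    have "\<bar>real_of_int (W l)\<bar> = fact (nat (int n + l)) * fact (nat (int n - l))"
      using abs_W[OF l] by (metis of_int_abs of_int_fact of_int_mult)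
    then have "\<bar>r i l\<bar> = \<bar>real_of_int (Nint i l)\<bar> / (fact (nat (int n + l)) * fact (nat (int n - l)))"
      by (simp add: r_eq[OF l])
    also have "\<dots> \<le> Nbound i / (fact (nat (int n + l)) * fact (nat (int n - l)))"
      by (intro divide_right_mono abs_Nint_le l) auto
    finally show "\<bar>r i l\<bar> \<le> Nbound i / fact (2*n) * (fact (2*n) / (fact (nat (int n + l)) * fact (nat (int n - l))))"
      by simp
  qed
  also have "\<dots> = Nbound i / fact (2*n) * 4^n"
    by (simp only: I_def central_binomial_row flip: sum_distrib_left)
  finally show ?thesis by (simp only: mult.commute)
qed

text \<open>The product of all these bounds is a squared multinomial coefficient, which is at most
  \<open>exp(C n)\<close> after the factor \<open>4^(an)\<close>.\<close>

lemma prod_block: "(\<Prod>i<b. block i) = fact (2*d*n + 2*n*b) / fact (2*d*n)"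
  using prod_blocks[of real "2*d*n" "2*n" b] by (simp add: block_def prod_greaterThanAtMost_fact add.assoc)

lemma prod_Nbound: "(\<Prod>i<a. Nbound i / fact (2*n)) = (fact (2*d*n + 2*n*b) / (fact (2*d*n) * fact (2*n) ^ b))^2"
proof -
  let ?f = "\<lambda>i. Nbound i / fact (2*n)"
  have "(\<Prod>i<a. ?f i) = prod ?f {0..<b} * prod ?f {b..<2*b} * prod ?f {2*b..<a}"
    using two_b_le_a by (simp add: atLeast0LessThan[symmetric] prod.atLeastLessThan_concat)
  also have "prod ?f {0..<b} = (\<Prod>i<b. block i / fact (2*n))"
    by (intro prod.cong) (auto simp: Nbound_def)
  also have "prod ?f {b..<2*b} = (\<Prod>i<b. block i / fact (2*n))"
    using prod.shift_bounds_nat_ivl[of ?f 0 b b] by (simp add: mult_2 atLeast0LessThan Nbound_def)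
  also have "prod ?f {2*b..<a} = 1"
    by (intro prod.neutral) (auto simp: Nbound_def)
  also have "(\<Prod>i<b. block i / fact (2*n)) = fact (2*d*n + 2*n*b) / (fact (2*d*n) * fact (2*n) ^ b)"
    by (simp add: prod_dividef prod_block)
  finally show ?thesis by (simp add: power2_eq_square)
qed

lemma multinomial_ratio_le:
  "fact (2*d*n + 2*n*b) / (fact (2*d*n) * fact (2*n) ^ b)
    \<le> real (2*n*(d+b)) ^ (2*n*(d+b)) / (real (2*n*d) ^ (2*n*d) * real (2*n) ^ (2*n*b))"
proof -
  define F where "F = (fact (2*n*d + b*(2*n)) :: real)"
  define B where "B = (fact (2*n*d) * fact (2*n) ^ b :: real)"
  define Y where "Y = real (2*n*d + b*(2*n)) ^ (2*n*d + b*(2*n))"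
  define E where "E = real (2*n*d) ^ (2*n*d) * real (2*n) ^ (b*(2*n))"
  have pos: "B > 0" "E > 0" using d_pos n_pos by (simp_all add: B_def E_def)
  have "F / B = (F * E) / (B * E)" using pos by simp
  also have "\<dots> \<le> (Y * B) / (B * E)"
    using multinomial_power_bound[of "2*n*d" b "2*n"] pos
    by (intro divide_right_mono) (simp_all add: F_def B_def Y_def E_def)
  also have "\<dots> = Y / E" using pos by simp
  finally have "F / B \<le> Y / E" .
  moreover have "2*d*n + 2*n*b = 2*n*d + b*(2*n)" "2*n*(d+b) = 2*n*d + b*(2*n)" "2*n*b = b*(2*n)"
    "2*d*n = 2*n*d"
    by (simp_all add: algebra_simps)
  ultimately show ?thesis by (simp only: F_def B_def Y_def E_def)
qed

lemma residue_mass_prod: "(\<Prod>i<a. \<Sum>l\<in>I. \<bar>r i l\<bar>) \<le> exp (growth_rate d a b * real n)"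
proof -
  have "(\<Prod>i<a. \<Sum>l\<in>I. \<bar>r i l\<bar>) \<le> (\<Prod>i<a. 4^n * (Nbound i / fact (2*n)))"
    using residue_mass by (intro prod_mono conjI sum_nonneg) auto
  also have "\<dots> = (4^n)^a * (\<Prod>i<a. Nbound i / fact (2*n))"
    by (simp only: prod.distrib prod_constant card_lessThan)
  also have "\<dots> = 4^(a*n) * (fact (2*d*n + 2*n*b) / (fact (2*d*n) * fact (2*n) ^ b))^2"
    by (simp only: prod_Nbound power_mult mult.commute[of a n])
  also have "\<dots> \<le> 4^(a*n) * (real (2*n*(d+b)) ^ (2*n*(d+b)) / (real (2*n*d) ^ (2*n*d) * real (2*n) ^ (2*n*b)))^2"
    by (intro mult_left_mono power_mono multinomial_ratio_le) auto
  also have "\<dots> = exp (growth_rate d a b * real n)"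
    unfolding growth_rate_def using d_pos by (rule power_ratio_exp)
  finally show ?thesis .
qed

lemma x_separated: "l \<in> I \<Longrightarrow> m \<in> I \<Longrightarrow> m \<noteq> l \<Longrightarrow> 1 \<le> \<bar>x m - x l\<bar>"
proof -
  assume "m \<noteq> l"
  then have "1 \<le> real_of_int \<bar>m - l\<bar>" by linarith
  moreover have "1 \<le> real d" using d_pos by simp
  ultimately have "1 * 1 \<le> real d * real_of_int \<bar>m - l\<bar>" by (intro mult_mono) auto
  then show ?thesis by (simp add: x_def abs_mult flip: right_diff_distrib)
qed

lemma Acoef_mass: "coeff_mass I a (Acoef d a b n) \<le> mass_factor a * exp (growth_rate d a b * real n)"
proof -
  have a: "Suc (a - 1) = a" using a_pos by simp
  have "coeff_mass I (Suc (a - 1)) (prod_coeff I x r (a - 1)) \<le> mass_factor a * (\<Prod>i<Suc (a - 1). \<Sum>l\<in>I. \<bar>r i l\<bar>)"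
    unfolding mass_factor_def
    by (rule prod_coeff_mass[where I = I and x = x and k = "a - 1" and rs = r, OF finite_I x_separated])
  then have "coeff_mass I a (Acoef d a b n) \<le> mass_factor a * (\<Prod>i<a. \<Sum>l\<in>I. \<bar>r i l\<bar>)"
    by (simp only: a Acoef_eq)
  also have "\<dots> \<le> mass_factor a * exp (growth_rate d a b * real n)"
    by (intro mult_left_mono residue_mass_prod) (simp add: less_imp_le[OF mass_factor_pos])
  finally show ?thesis .
qed

lemma abs_Aj_le:
  assumes "1 \<le> j" "j \<le> a"
  shows "\<bar>Aj d a b j n\<bar> \<le> real n * (2 * mass_factor a) * exp (growth_rate d a b * real n)"
proof -
  have "\<bar>Aj d a b j n\<bar> \<le> (\<Sum>l\<in>I. \<bar>Acoef d a b n l j\<bar>)"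
    unfolding Aj_def I_def by (rule sum_abs)
  also have "\<dots> \<le> coeff_mass I a (Acoef d a b n)"
    unfolding coeff_mass_def using assms
    by (intro sum_mono member_le_sum[where f = "\<lambda>j'. \<bar>Acoef d a b n _ j'\<bar>"]) auto
  also have "\<dots> \<le> mass_factor a * exp (growth_rate d a b * real n)" by (rule Acoef_mass)
  also have "\<dots> \<le> real n * (2 * mass_factor a) * exp (growth_rate d a b * real n)"
    using n_pos mass_factor_pos by (intro mult_right_mono) auto
  finally show ?thesis .
qed

lemma abs_harmonic_tail_le:
  assumes "1 \<le> m" "l \<in> I"
  shows "\<bar>harmonic_tail m j l\<bar> \<le> 2 * real n"
proof -
  have "\<bar>harmonic_tail m j l\<bar> \<le> (\<Sum>k\<in>{0..<nat (int n - l)}. \<bar>1 / (real d * real k + real m) ^ j\<bar>)"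
    unfolding harmonic_tail_def by (rule sum_abs)
  also have "\<dots> \<le> (\<Sum>k\<in>{0..<nat (int n - l)}. 1)"
  proof (intro sum_mono)
    fix k
    have "1 \<le> real d * real k + real m" using assms(1) by (simp add: add_increasing)
    then show "\<bar>1 / (real d * real k + real m) ^ j\<bar> \<le> 1" by (simp add: one_le_power)
  qed
  also have "\<dots> \<le> 2 * real n" using assms(2) by (auto simp: I_def)
  finally show ?thesis .
qed

lemma abs_Bm_le:
  assumes "1 \<le> m"
  shows "\<bar>Bm d a b m n\<bar> \<le> real n * (2 * mass_factor a) * exp (growth_rate d a b * real n)"
proof -
  have "\<bar>Bm d a b m n\<bar> \<le> (\<Sum>j=1..a. \<Sum>l\<in>I. \<bar>Acoef d a b n l j * harmonic_tail m j l\<bar>)"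
    unfolding Bm_eq by (rule order_trans[OF sum_abs]) (intro sum_mono sum_abs)
  also have "\<dots> = (\<Sum>j=1..a. \<Sum>l\<in>I. \<bar>Acoef d a b n l j\<bar> * \<bar>harmonic_tail m j l\<bar>)"
    by (simp only: abs_mult)
  also have "\<dots> \<le> (\<Sum>j=1..a. \<Sum>l\<in>I. \<bar>Acoef d a b n l j\<bar> * (2 * real n))"
    using assms abs_harmonic_tail_le by (intro sum_mono mult_left_mono) auto
  also have "\<dots> = 2 * real n * coeff_mass I a (Acoef d a b n)"
    unfolding coeff_mass_def sum_distrib_left by (subst sum.swap) (simp add: mult_ac)
  also have "\<dots> \<le> 2 * real n * (mass_factor a * exp (growth_rate d a b * real n))"
    by (intro mult_left_mono Acoef_mass) auto
  finally show ?thesis by (simp add: mult_ac)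
qed

end

theorem proposition3p4:
  fixes d a b :: nat
  assumes "d > 0" and "a > 0" and "b > 0" and "a \<ge> 2 * b"
  defines "C \<equiv> 2 * real a * ln 2 + 4 * real (b + d) * ln (real (b + d)) - 4 * real d * ln (real d)"
  shows "(\<forall>n j. n \<ge> 1 \<and> 2 \<le> j \<and> j \<le> a \<and> j mod 2 = a mod 2 \<longrightarrow>
            real (Dlcm (2*d*n)) ^ a * Aj d a b j n \<in> \<int>)
       \<and> (\<forall>n m. n \<ge> 1 \<and> 1 \<le> m \<and> m \<le> d \<longrightarrow>
            real (Dlcm (2*d*n)) ^ a * Bm d a b m n \<in> \<int>)
       \<and> (\<forall>j. 2 \<le> j \<and> j \<le> a \<and> j mod 2 = a mod 2 \<longrightarrow>
            (\<forall>\<epsilon>>0. \<forall>\<^sub>F n in sequentially. ln \<bar>Aj d a b j n\<bar> / real n \<le> C + \<epsilon>))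
       \<and> (\<forall>m. 1 \<le> m \<and> m \<le> d \<longrightarrow>
            (\<forall>\<epsilon>>0. \<forall>\<^sub>F n in sequentially. ln \<bar>Bm d a b m n\<bar> / real n \<le> C + \<epsilon>))"
proof -
  have P: "Pn_construction d a b n" if "n \<ge> 1" for n
    using assms that by unfold_locales auto
  have C: "C = growth_rate d a b" by (simp add: C_def growth_rate_def)
  have rate: "growth_rate d a b \<ge> 0" and factor: "2 * mass_factor a > 0"
    using growth_rate_nonneg[OF assms(1)] mass_factor_pos by auto
  show ?thesis
    unfolding C
  proof (intro conjI allI impI)
    fix n j :: nat assume "n \<ge> 1 \<and> 2 \<le> j \<and> j \<le> a \<and> j mod 2 = a mod 2"
    then show "real (Dlcm (2*d*n)) ^ a * Aj d a b j n \<in> \<int>"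
      using Pn_construction.Aj_integral[OF P] by auto
  next
    fix n m :: nat assume "n \<ge> 1 \<and> 1 \<le> m \<and> m \<le> d"
    then show "real (Dlcm (2*d*n)) ^ a * Bm d a b m n \<in> \<int>"
      using Pn_construction.Bm_integral[OF P] by auto
  next
    fix j :: nat and \<epsilon> :: real assume "2 \<le> j \<and> j \<le> a \<and> j mod 2 = a mod 2" "\<epsilon> > 0"
    then show "\<forall>\<^sub>F n in sequentially. ln \<bar>Aj d a b j n\<bar> / real n \<le> growth_rate d a b + \<epsilon>"
      using Pn_construction.abs_Aj_le[OF P] by (intro eventually_log_growth[OF _ factor rate]) auto
  next
    fix m :: nat and \<epsilon> :: real assume "1 \<le> m \<and> m \<le> d" "\<epsilon> > 0"
    then show "\<forall>\<^sub>F n in sequentially. ln \<bar>Bm d a b m n\<bar> / real n \<le> growth_rate d a b + \<epsilon>"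
      using Pn_construction.abs_Bm_le[OF P] by (intro eventually_log_growth[OF _ factor rate]) auto
  qed
qed

end
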